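(* Let $G$ be a compact, totally disconnected group and $\alpha$ an automorphism of $G$ that is topologically transitive. Then for every $k\in\mathbb{Z}\setminus\{0\}$ the map $\eta_k:G\to G$, $\eta_k(x)=x^{-1}\alpha^k(x)$, is surjective.
   Context: $\alpha$ is topologically transitive if there is $x\in G$ with $\{\alpha^n(x):n\in\mathbb{Z}\}$ dense in $G$. *)

theory Defs
  imports "HOL-Analysis.Analysis" "HOL-Algebra.Algebra"
begin

definition topological_group :: "('a, 'b) monoid_scheme \<Rightarrow> 'a topology \<Rightarrow> bool" where
  "topological_group G T \<longleftrightarrow> group G \<and> topspace T = carrier G \<and>
     continuous_map (prod_topology T T) T (\<lambda>p. fst p \<otimes>\<^bsub>G\<^esub> snd p) \<and>
     continuous_map T T (\<lambda>x. inv\<^bsub>G\<^esub> x)"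

definition totally_disconnected_space :: "'a topology \<Rightarrow> bool" where
  "totally_disconnected_space T \<longleftrightarrow>
     (\<forall>x\<in>topspace T. connected_component_of_set T x = {x})"

definition topological_automorphism ::
    "('a, 'b) monoid_scheme \<Rightarrow> 'a topology \<Rightarrow> ('a \<Rightarrow> 'a) \<Rightarrow> bool" where
  "topological_automorphism G T \<alpha> \<longleftrightarrow> \<alpha> \<in> iso G G \<and> homeomorphic_map T T \<alpha>"

definition aut_pow :: "('a, 'b) monoid_scheme \<Rightarrow> ('a \<Rightarrow> 'a) \<Rightarrow> int \<Rightarrow> 'a \<Rightarrow> 'a" where
  "aut_pow G \<alpha> k = (if 0 \<le> k then \<alpha> ^^ nat k else (inv_into (carrier G) \<alpha>) ^^ nat (- k))"

definition topologically_transitive ::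
    "('a, 'b) monoid_scheme \<Rightarrow> 'a topology \<Rightarrow> ('a \<Rightarrow> 'a) \<Rightarrow> bool" where
  "topologically_transitive G T \<alpha> \<longleftrightarrow>
     (\<exists>x\<in>carrier G. T closure_of {aut_pow G \<alpha> n x | n. True} = topspace T)"

end

theory Submission
  imports Defs
begin

text \<open>Write \<open>\<phi> = \<alpha>\<^sup>k\<close> and call \<open>x, y\<close> twisted conjugate if \<open>y = g\<^sup>-\<^sup>1 x \<phi>(g)\<close> for some \<open>g\<close>;
the image of \<open>\<eta>\<^sub>k\<close> is the twisted class of \<open>1\<close>. Twisted classes are images of the compact
group under continuous maps, hence closed, and \<open>\<phi>(x)\<close> is twisted conjugate to \<open>x\<close>. So the dense
orbit of a point \<open>x\<^sub>0\<close> under the powers of \<open>\<alpha>\<close> lies in the finite union of the classes of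
\<open>\<alpha>\<^sup>r(x\<^sub>0)\<close>, \<open>|r| \<le> |k|\<close>, which is therefore all of \<open>G\<close>. Hence \<open>1\<close> is twisted conjugate to some
\<open>\<alpha>\<^sup>r(x\<^sub>0)\<close>; since each \<open>\<alpha>\<^sup>n\<close> commutes with \<open>\<phi>\<close> and fixes \<open>1\<close>, it maps the class of \<open>1\<close> into
itself, so that class contains the whole orbit of \<open>x\<^sub>0\<close> and, being closed, equals \<open>G\<close>.
Total disconnectedness is only used to make \<open>G\<close> Hausdorff.\<close>

lemma topological_group_continuous_map_mult:
  fixes G (structure) and S :: "'c topology"
  assumes "topological_group G T" "continuous_map S T f" "continuous_map S T g"
  shows "continuous_map S T (\<lambda>x. f x \<otimes> g x)"
  using assms(1) continuous_map_compose[OF continuous_map_pairedI[OF assms(2,3)],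
      of T "\<lambda>p. fst p \<otimes> snd p"]
  by (simp add: topological_group_def o_def)

lemma topological_group_continuous_map_inv:
  fixes G (structure) and S :: "'c topology"
  assumes "topological_group G T" "continuous_map S T f"
  shows "continuous_map S T (\<lambda>x. inv (f x))"
  using continuous_map_compose[OF assms(2)] assms(1)
  by (auto simp: topological_group_def o_def)

lemma topological_group_Hausdorff_space:
  fixes G (structure)
  assumes tg: "topological_group G T" and one: "closedin T {\<one>}"
  shows "Hausdorff_space T"
proof -
  interpret group G using tg by (simp add: topological_group_def)
  have top: "topspace T = carrier G" using tg by (simp add: topological_group_def)
  have diagonal: "{p \<in> topspace (prod_topology T T). inv (fst p) \<otimes> snd p \<in> {\<one>}}
      = (\<lambda>x. (x, x)) ` topspace T"
  proof -
    have "inv a \<otimes> b = \<one> \<longleftrightarrow> a = b" if "a \<in> carrier G" "b \<in> carrier G" for a b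
      using that by (metis inv_equality inv_inv inv_closed l_inv)
    then show ?thesis by (auto simp: top)
  qed
  have "continuous_map (prod_topology T T) T (\<lambda>p. inv (fst p) \<otimes> snd p)"
    by (intro topological_group_continuous_map_mult topological_group_continuous_map_inv tg
        continuous_map_fst continuous_map_snd)
  then have "closedin (prod_topology T T)
      {p \<in> topspace (prod_topology T T). inv (fst p) \<otimes> snd p \<in> {\<one>}}"
    using one by (rule closedin_continuous_map_preimage)
  then show ?thesis by (simp only: diagonal Hausdorff_space_closedin_diagonal)
qed

lemma totally_disconnected_space_closedin_singleton:
  assumes "totally_disconnected_space T" "x \<in> topspace T"
  shows "closedin T {x}"
  using assms closedin_connected_component_of[of T x]
  by (simp add: totally_disconnected_space_def)

lemma aut_pow_in_carrier:
  assumes "bij_betw \<alpha> (carrier G) (carrier G)" "x \<in> carrier G"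
  shows "aut_pow G \<alpha> n x \<in> carrier G"
  using bij_betw_funpow[OF assms(1)] bij_betw_funpow[OF bij_betw_inv_into[OF assms(1)]] assms(2)
  by (auto simp: aut_pow_def intro: bij_betw_apply)

lemma aut_pow_succ:
  assumes bij: "bij_betw \<alpha> (carrier G) (carrier G)" and x: "x \<in> carrier G"
  shows "aut_pow G \<alpha> (n + 1) x = \<alpha> (aut_pow G \<alpha> n x)"
proof (cases "n \<ge> 0")
  case True
  then have "nat (n + 1) = Suc (nat n)" by simp
  with True show ?thesis by (simp add: aut_pow_def)
next
  case False
  define \<beta> and m where "\<beta> = inv_into (carrier G) \<alpha>" and "m = nat (- (n + 1))"
  have "aut_pow G \<alpha> (n + 1) x = (\<beta> ^^ m) x"
  proof (cases "n + 1 = 0")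
    case True
    then show ?thesis by (simp add: aut_pow_def m_def)
  next
    case nonzero: False
    with False show ?thesis by (simp add: aut_pow_def \<beta>_def m_def)
  qed
  moreover have "nat (- n) = Suc m" using False by (simp add: m_def)
  then have "aut_pow G \<alpha> n x = \<beta> ((\<beta> ^^ m) x)"
    using False by (simp add: aut_pow_def \<beta>_def)
  moreover have "(\<beta> ^^ m) x \<in> carrier G"
    using bij_betw_apply[OF bij_betw_funpow[OF bij_betw_inv_into[OF bij]] x] by (simp add: \<beta>_def)
  ultimately show ?thesis
    using bij by (simp add: \<beta>_def bij_betw_inv_into_right)
qed

lemma aut_pow_add:
  assumes bij: "bij_betw \<alpha> (carrier G) (carrier G)" and x: "x \<in> carrier G"
  shows "aut_pow G \<alpha> (m + n) x = aut_pow G \<alpha> m (aut_pow G \<alpha> n x)"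
proof (induction m rule: int_induct[where k = 0])
  case base
  show ?case by (simp add: aut_pow_def)
next
  case (step1 i)
  have "aut_pow G \<alpha> (i + 1 + n) x = \<alpha> (aut_pow G \<alpha> (i + n) x)"
    using aut_pow_succ[OF bij x, of "i + n"] by (simp add: ac_simps)
  also have "\<dots> = aut_pow G \<alpha> (i + 1) (aut_pow G \<alpha> n x)"
    using step1(2) aut_pow_succ[OF bij aut_pow_in_carrier[OF bij x]] by simp
  finally show ?case .
next
  case (step2 i)
  have "\<alpha> (aut_pow G \<alpha> (i - 1 + n) x) = aut_pow G \<alpha> (i + n) x"
    using aut_pow_succ[OF bij x, of "i - 1 + n"] by (simp add: ac_simps)
  also have "\<dots> = \<alpha> (aut_pow G \<alpha> (i - 1) (aut_pow G \<alpha> n x))"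
    using step2(2) aut_pow_succ[OF bij aut_pow_in_carrier[OF bij x], of "i - 1"] by simp
  finally show ?case
    using inj_onD[OF bij_betw_imp_inj_on[OF bij]] aut_pow_in_carrier[OF bij] x by blast
qed

lemma aut_pow_hom:
  assumes "group G" "\<alpha> \<in> iso G G"
  shows "aut_pow G \<alpha> n \<in> hom G G"
proof -
  have funpow_hom: "f ^^ m \<in> hom G G" if "f \<in> hom G G" for f and m :: nat
    by (induction m) (use that in \<open>auto simp: hom_def Pi_iff\<close>)
  have "inv_into (carrier G) \<alpha> \<in> hom G G"
    using group.iso_set_sym[OF assms] by (simp add: iso_def)
  with assms(2) show ?thesis by (simp add: aut_pow_def iso_def funpow_hom)
qed

lemma aut_pow_continuous_map:
  assumes homeo: "homeomorphic_map T T \<alpha>" and top: "topspace T = carrier G"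
  shows "continuous_map T T (aut_pow G \<alpha> n)"
proof -
  have funpow_cont: "continuous_map T T (f ^^ m)" if "continuous_map T T f" for f and m :: nat
    by (induction m) (simp_all add: continuous_map_compose[OF _ that, unfolded o_def])
  have bij: "bij_betw \<alpha> (topspace T) (topspace T)"
    using homeo by (simp add: homeomorphic_eq_everything_map bij_betw_def)
  have "continuous_map T T (inv_into (topspace T) \<alpha>)"
  proof (rule open_eq_continuous_inverse_map[THEN iffD1])
    show "open_map T T \<alpha>" using homeo by (simp add: homeomorphic_eq_everything_map)
  qed (use bij in \<open>auto simp: bij_betw_apply bij_betw_inv_into_left bij_betw_inv_into_right
        intro: bij_betw_apply[OF bij_betw_inv_into]\<close>)
  then show ?thesis
    using homeo top by (simp add: aut_pow_def funpow_cont homeomorphic_imp_continuous_map)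
qed

definition twisted_class :: "('a, 'b) monoid_scheme \<Rightarrow> ('a \<Rightarrow> 'a) \<Rightarrow> 'a \<Rightarrow> 'a set" where
  "twisted_class G \<phi> c = (\<lambda>y. inv\<^bsub>G\<^esub> y \<otimes>\<^bsub>G\<^esub> c \<otimes>\<^bsub>G\<^esub> \<phi> y) ` carrier G"

context group
begin

lemma twisted_class_subset:
  "\<phi> \<in> hom G G \<Longrightarrow> c \<in> carrier G \<Longrightarrow> twisted_class G \<phi> c \<subseteq> carrier G"
  by (auto simp: twisted_class_def hom_in_carrier)

lemma self_mem_twisted_class:
  assumes "\<phi> \<in> hom G G" "c \<in> carrier G"
  shows "c \<in> twisted_class G \<phi> c"
proof -
  have "c = inv \<one> \<otimes> c \<otimes> \<phi> \<one>"
    using assms by (simp add: Group.hom_one[OF _ is_group is_group])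
  then show ?thesis unfolding twisted_class_def by blast
qed

lemma hom_mem_twisted_class:
  assumes "\<phi> \<in> hom G G" "c \<in> carrier G"
  shows "\<phi> c \<in> twisted_class G \<phi> c"
proof -
  have "\<phi> c = inv c \<otimes> c \<otimes> \<phi> c"
    using assms by (simp add: hom_in_carrier)
  with assms(2) show ?thesis unfolding twisted_class_def by blast
qed

lemma twisted_class_trans:
  assumes \<phi>: "\<phi> \<in> hom G G" and c: "c \<in> carrier G"
    and d: "d \<in> twisted_class G \<phi> c" and e: "e \<in> twisted_class G \<phi> d"
  shows "e \<in> twisted_class G \<phi> c"
proof -
  obtain y where y: "y \<in> carrier G" "d = inv y \<otimes> c \<otimes> \<phi> y"
    using d by (auto simp: twisted_class_def)
  obtain z where z: "z \<in> carrier G" "e = inv z \<otimes> d \<otimes> \<phi> z"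
    using e by (auto simp: twisted_class_def)
  have "e = inv (y \<otimes> z) \<otimes> c \<otimes> \<phi> (y \<otimes> z)"
    using y z c \<phi> by (simp add: hom_mult hom_in_carrier inv_mult_group m_assoc)
  with y z show ?thesis unfolding twisted_class_def by blast
qed

lemma twisted_class_sym:
  assumes \<phi>: "\<phi> \<in> hom G G" and c: "c \<in> carrier G" and d: "d \<in> twisted_class G \<phi> c"
  shows "c \<in> twisted_class G \<phi> d"
proof -
  obtain y where y: "y \<in> carrier G" "d = inv y \<otimes> c \<otimes> \<phi> y"
    using d by (auto simp: twisted_class_def)
  interpret hom: group_hom G G \<phi>
    using \<phi> by (simp add: group_hom_def group_hom_axioms_def is_group)
  have "c = inv (inv y) \<otimes> d \<otimes> \<phi> (inv y)"
    using y c by (simp add: m_assoc) (metis m_assoc r_inv l_one inv_closed)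
  with y show ?thesis unfolding twisted_class_def by blast
qed

lemma twisted_class_image:
  assumes \<phi>: "\<phi> \<in> hom G G" and \<psi>: "\<psi> \<in> hom G G"
    and comm: "\<And>y. y \<in> carrier G \<Longrightarrow> \<psi> (\<phi> y) = \<phi> (\<psi> y)"
    and c: "c \<in> carrier G" and x: "x \<in> twisted_class G \<phi> c"
  shows "\<psi> x \<in> twisted_class G \<phi> (\<psi> c)"
proof -
  obtain y where y: "y \<in> carrier G" "x = inv y \<otimes> c \<otimes> \<phi> y"
    using x by (auto simp: twisted_class_def)
  interpret hom: group_hom G G \<psi>
    using \<psi> by (simp add: group_hom_def group_hom_axioms_def is_group)
  have "\<psi> x = inv (\<psi> y) \<otimes> \<psi> c \<otimes> \<phi> (\<psi> y)"
    using y c \<phi> by (simp add: hom_in_carrier comm)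
  moreover have "\<psi> y \<in> carrier G" using y by simp
  ultimately show ?thesis unfolding twisted_class_def by (rule image_eqI)
qed

end

lemma twisted_class_closedin:
  fixes G (structure)
  assumes tg: "topological_group G T" and "compact_space T" "Hausdorff_space T"
    and \<phi>: "continuous_map T T \<phi>" and c: "c \<in> carrier G"
  shows "closedin T (twisted_class G \<phi> c)"
proof -
  have top: "topspace T = carrier G" using tg by (simp add: topological_group_def)
  have "continuous_map T T (\<lambda>y. inv y \<otimes> c \<otimes> \<phi> y)"
    by (intro topological_group_continuous_map_mult topological_group_continuous_map_inv tg \<phi>
        continuous_map_id[unfolded id_def] continuous_map_const[THEN iffD2]) (simp add: top c)
  then have "compactin T (twisted_class G \<phi> c)"
    using image_compactin assms(2) top by (simp add: compact_space_def twisted_class_def)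
  then show ?thesis using compactin_imp_closedin assms(3) by blast
qed

lemma aut_pow_mult_mem_twisted_class:
  assumes "group G" and \<alpha>: "\<alpha> \<in> iso G G" and c: "c \<in> carrier G"
  shows "aut_pow G \<alpha> (k * q) c \<in> twisted_class G (aut_pow G \<alpha> k) c"
proof -
  interpret group G by fact
  have bij: "bij_betw \<alpha> (carrier G) (carrier G)" using \<alpha> by (simp add: iso_def)
  have hom: "aut_pow G \<alpha> k \<in> hom G G" using aut_pow_hom[OF assms(1,2)] .
  note in_carrier = aut_pow_in_carrier[OF bij c]
  show ?thesis
  proof (induction q rule: int_induct[where k = 0])
    case base
    show ?case using self_mem_twisted_class[OF hom c] by (simp add: aut_pow_def)
  next
    case (step1 i)
    have "aut_pow G \<alpha> (k * (i + 1)) c = aut_pow G \<alpha> k (aut_pow G \<alpha> (k * i) c)"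
      using aut_pow_add[OF bij c, of k "k * i"] by (simp add: algebra_simps)
    then show ?case
      using twisted_class_trans[OF hom c step1(2) hom_mem_twisted_class[OF hom in_carrier]]
      by simp
  next
    case (step2 i)
    define d where "d = aut_pow G \<alpha> (k * (i - 1)) c"
    have d: "d \<in> carrier G" unfolding d_def by (rule in_carrier)
    have "aut_pow G \<alpha> k d = aut_pow G \<alpha> (k * i) c"
      using aut_pow_add[OF bij c, of k "k * (i - 1)"] by (simp add: d_def algebra_simps)
    then have "d \<in> twisted_class G (aut_pow G \<alpha> k) (aut_pow G \<alpha> (k * i) c)"
      using twisted_class_sym[OF hom d hom_mem_twisted_class[OF hom d]] by simp
    then show ?case using twisted_class_trans[OF hom c step2(2)] by (simp add: d_def)
  qed
qed

lemma twisted_class_one_eq_carrier: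
  fixes G (structure)
  assumes tg: "topological_group G T" and cpt: "compact_space T" and H: "Hausdorff_space T"
    and aut: "topological_automorphism G T \<alpha>" and trans: "topologically_transitive G T \<alpha>"
    and k: "k \<noteq> 0"
  shows "twisted_class G (aut_pow G \<alpha> k) \<one> = carrier G"
proof -
  interpret group G using tg by (simp add: topological_group_def)
  have top: "topspace T = carrier G" using tg by (simp add: topological_group_def)
  have \<alpha>: "\<alpha> \<in> iso G G" and bij: "bij_betw \<alpha> (carrier G) (carrier G)"
    using aut by (auto simp: topological_automorphism_def iso_def)
  let ?A = "aut_pow G \<alpha>" and ?C = "twisted_class G (aut_pow G \<alpha> k)"
  have hom: "?A n \<in> hom G G" for n using aut_pow_hom[OF is_group \<alpha>] .
  have A_in: "?A n x \<in> carrier G" if "x \<in> carrier G" for n x using aut_pow_in_carrier[OF bij that] .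
  have closed: "closedin T (?C c)" if "c \<in> carrier G" for c
    using aut top that by (intro twisted_class_closedin[OF tg cpt H] aut_pow_continuous_map)
      (auto simp: topological_automorphism_def)
  obtain x0 where x0: "x0 \<in> carrier G" and dense: "T closure_of range (\<lambda>n. ?A n x0) = carrier G"
    using trans by (auto simp: topologically_transitive_def top full_SetCompr_eq)
  have dense_sub: "carrier G \<subseteq> S" if "closedin T S" "\<And>n. ?A n x0 \<in> S" for S
    using closure_of_minimal[of "range (\<lambda>n. ?A n x0)" S T] that dense by auto
  define R where "R = {-\<bar>k\<bar>..\<bar>k\<bar>}"
  have "?A n x0 \<in> (\<Union>r\<in>R. ?C (?A r x0))" for n
  proof -
    have "n mod k \<in> R" using abs_mod_less[OF k, of n] by (auto simp: R_def)
    moreover have "?A n x0 = ?A (k * (n div k)) (?A (n mod k) x0)"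
      using aut_pow_add[OF bij x0, of "k * (n div k)" "n mod k"] by simp
    moreover have "\<dots> \<in> ?C (?A (n mod k) x0)"
      by (rule aut_pow_mult_mem_twisted_class[OF is_group \<alpha> A_in[OF x0]])
    ultimately show ?thesis by (metis UN_I)
  qed
  then have "carrier G \<subseteq> (\<Union>r\<in>R. ?C (?A r x0))"
    using closed A_in[OF x0] by (intro dense_sub closedin_Union) (auto simp: R_def)
  then obtain r where "\<one> \<in> ?C (?A r x0)" using one_closed by blast
  then have r: "?A r x0 \<in> ?C \<one>" by (rule twisted_class_sym[OF hom A_in[OF x0]])
  have "?A n x0 \<in> ?C \<one>" for n
  proof -
    have comm: "?A (n - r) (?A k y) = ?A k (?A (n - r) y)" if "y \<in> carrier G" for y
      using aut_pow_add[OF bij that, of "n - r" k] aut_pow_add[OF bij that, of k "n - r"]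
      by (simp add: add.commute)
    have "?A n x0 = ?A (n - r) (?A r x0)" using aut_pow_add[OF bij x0, of "n - r" r] by simp
    also have "\<dots> \<in> ?C (?A (n - r) \<one>)"
      by (rule twisted_class_image[OF hom hom comm one_closed r])
    also have "?A (n - r) \<one> = \<one>" by (rule Group.hom_one[OF hom is_group is_group])
    finally show ?thesis .
  qed
  then have "carrier G \<subseteq> ?C \<one>" using closed by (intro dense_sub) auto
  then show ?thesis using twisted_class_subset[OF hom one_closed] by blast
qed

theorem proposition7p1:
  fixes G :: "('a, 'b) monoid_scheme" and T :: "'a topology" and \<alpha> :: "'a \<Rightarrow> 'a"
  assumes "topological_group G T"
    and "compact_space T"
    and "totally_disconnected_space T"
    and "topological_automorphism G T \<alpha>"
    and "topologically_transitive G T \<alpha>"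
    and "k \<noteq> (0::int)"
  shows "(\<lambda>x. inv\<^bsub>G\<^esub> x \<otimes>\<^bsub>G\<^esub> aut_pow G \<alpha> k x) ` carrier G = carrier G"
proof -
  interpret group G using assms(1) by (simp add: topological_group_def)
  have "closedin T {\<one>\<^bsub>G\<^esub>}"
    using assms(1) totally_disconnected_space_closedin_singleton[OF assms(3)]
    by (simp add: topological_group_def)
  then have "Hausdorff_space T" using topological_group_Hausdorff_space assms(1) by blast
  then have "twisted_class G (aut_pow G \<alpha> k) \<one>\<^bsub>G\<^esub> = carrier G"
    using twisted_class_one_eq_carrier assms by blast
  moreover have "twisted_class G (aut_pow G \<alpha> k) \<one>\<^bsub>G\<^esub> = (\<lambda>x. inv\<^bsub>G\<^esub> x \<otimes>\<^bsub>G\<^esub> aut_pow G \<alpha> k x) ` carrier G"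
    by (auto simp: twisted_class_def intro!: image_cong)
  ultimately show ?thesis by simp
qed

end
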